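(* Let $X_1,\dots,X_n$ be independent random variables with $X_i\sim\mathsf{Gam}(\alpha_i,\beta_i)$ (shape $\alpha_i>0$, rate $\beta_i>0$). Define $S_n=\sum_{i=1}^nX_i$, $\mu_n=\mathbb E[S_n]$ and $\sigma_n^2=\mathrm{Var}[S_n]$. Let $Z\sim\mathsf N(\mu_n,\sigma_n^2)$ and $G\sim\mathsf{Gam}(\alpha,\beta)$ with $\alpha/\beta=\mu_n$ and $\alpha/\beta^2=\sigma_n^2$. Denote the $j$th cumulants of $S_n$, $Z$, $G$ by $\kappa_j^{S_n}$, $\kappa_j^Z$, $\kappa_j^G$. Then $0<\kappa_1^{S_n}=\kappa_1^Z=\kappa_1^G=\mu_n$, $0<\kappa_2^{S_n}=\kappa_2^Z=\kappa_2^G=\sigma_n^2$, and for all $j\ge3$, \[ 0=\kappa_j^Z<\kappa_j^G\le\kappa_j^{S_n}. \]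
   Context: $\mathsf{Gam}(a,b)$ denotes the gamma distribution with shape $a$ and rate $b$ (density $b^a x^{a-1}e^{-bx}/\Gamma(a)$, mean $a/b$, variance $a/b^2$). *)

theory Defs
  imports "HOL-Probability.Probability"
begin

definition gamma_density :: "real \<Rightarrow> real \<Rightarrow> real \<Rightarrow> real" where
  "gamma_density a b x =
     (if x \<le> 0 then 0 else b powr a * x powr (a - 1) * exp (- b * x) / Gamma a)"

definition cumulant :: "'a measure \<Rightarrow> ('a \<Rightarrow> real) \<Rightarrow> nat \<Rightarrow> real" where
  "cumulant M X j = (deriv ^^ j) (\<lambda>t. ln (\<integral>\<omega>. exp (t * X \<omega>) \<partial>M)) 0"

end

theory Submission
  imports Defs
begin

(* The cumulant generating function of Gam(a, b) is t \<mapsto> a (ln b - ln (b - t)) for t < b, so its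
   j-th cumulant is a (j-1)! / b^j. By independence the cumulant generating function of S_n is the
   sum of those of the X_i, hence kappa_j(S_n) = (j-1)! sum_i alpha_i / beta_i^j, while the normal
   law has a quadratic cumulant generating function. Matching mean and variance means
   alpha/beta = sum_i alpha_i/beta_i and alpha/beta^2 = sum_i alpha_i/beta_i^2; with the weights
   w_i = (alpha_i/beta_i)/mu, which sum to 1, Jensen's inequality for x^(j-1) at the points 1/beta_i
   then gives alpha/beta^j <= sum_i alpha_i/beta_i^j. *)

lemma has_bochner_integral_gamma_kernel:
  fixes p c :: real
  assumes p: "0 < p" and c: "0 < c"
  shows "has_bochner_integral lborel
           (\<lambda>x. if x \<le> 0 then 0 else x powr (p - 1) * exp (- c * x)) (Gamma p / c powr p)"
proof -
  define h where "h x = (if x \<le> 0 then 0 else x powr (p - 1) * exp (- c * x))" for x :: real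
  define g where "g t = indicator {0..} t * t powr (p - 1) / exp t" for t :: real
  have [measurable]: "h \<in> borel_measurable borel" "g \<in> borel_measurable borel"
    unfolding h_def g_def by measurable
  have h_nonneg: "0 \<le> h x" for x
    unfolding h_def by auto
  have g_scaled: "ennreal (g (0 + c * x)) = ennreal (c powr (p - 1)) * ennreal (h x)" for x
  proof (cases "x \<le> 0")
    case True
    then have "g (c * x) = 0"
      using c unfolding g_def by (cases "x = 0") (auto simp: indicator_def zero_le_mult_iff)
    then show ?thesis
      using True by (simp add: h_def)
  next
    case False
    then have "g (c * x) = c powr (p - 1) * h x"
      using c unfolding g_def h_def by (simp add: powr_mult exp_minus field_simps)
    then show ?thesis
      using c h_nonneg[of x] by (simp add: ennreal_mult)
  qed
  have "ennreal (Gamma p) = (\<integral>\<^sup>+x. ennreal (g x) \<partial>lborel)"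
    using Gamma_conv_nn_integral_real[OF p] unfolding g_def by simp
  also have "\<dots> = ennreal c * (\<integral>\<^sup>+x. ennreal (g (0 + c * x)) \<partial>lborel)"
    using c nn_integral_real_affine[of g c 0] by simp
  also have "\<dots> = ennreal c * (ennreal (c powr (p - 1)) * (\<integral>\<^sup>+x. ennreal (h x) \<partial>lborel))"
    unfolding g_scaled by (subst nn_integral_cmult) auto
  also have "\<dots> = ennreal (c powr p) * (\<integral>\<^sup>+x. ennreal (h x) \<partial>lborel)"
    using c by (simp add: ennreal_mult[symmetric] mult.assoc[symmetric] powr_mult_base)
  finally have Gamma_eq: "ennreal (Gamma p) = ennreal (c powr p) * (\<integral>\<^sup>+x. ennreal (h x) \<partial>lborel)" .
  have "(\<integral>\<^sup>+x. ennreal (h x) \<partial>lborel)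
      = ennreal (1 / c powr p) * (ennreal (c powr p) * (\<integral>\<^sup>+x. ennreal (h x) \<partial>lborel))"
    using c by (simp add: mult.assoc[symmetric] ennreal_mult[symmetric])
  also have "\<dots> = ennreal (Gamma p / c powr p)"
    using c Gamma_real_pos[OF p] by (simp add: Gamma_eq[symmetric] ennreal_mult[symmetric])
  finally have "(\<integral>\<^sup>+x. ennreal (h x) \<partial>lborel) = ennreal (Gamma p / c powr p)" .
  then have "has_bochner_integral lborel h (Gamma p / c powr p)"
    by (intro has_bochner_integral_nn_integral) (use h_nonneg c Gamma_real_pos[OF p] in auto)
  then show ?thesis
    unfolding h_def .
qed

lemma gamma_density_nonneg: "0 < a \<Longrightarrow> 0 \<le> gamma_density a b x"
  unfolding gamma_density_def by (simp add: Gamma_real_pos less_imp_le)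

lemma has_bochner_integral_gamma_density_moment_exp:
  fixes a b t :: real
  assumes a: "0 < a" and t: "t < b"
  shows "has_bochner_integral lborel (\<lambda>x. gamma_density a b x * (x ^ k * exp (t * x)))
           (pochhammer a k * b powr a / (b - t) powr (a + k))"
proof -
  have density_times: "gamma_density a b x * (x ^ k * exp (t * x)) = b powr a / Gamma a *
      (if x \<le> 0 then 0 else x powr (a + k - 1) * exp (- (b - t) * x))" for x
  proof (cases "x \<le> 0")
    case False
    then have "x powr (a + k - 1) = x powr (a - 1) * x ^ k"
      by (simp add: powr_add[symmetric] powr_realpow[symmetric] algebra_simps)
    moreover have "exp (- (b - t) * x) = exp (- b * x) * exp (t * x)"
      by (simp add: exp_add[symmetric] algebra_simps)
    ultimately show ?thesis
      using False unfolding gamma_density_def by simp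
  qed (simp add: gamma_density_def)
  have "has_bochner_integral lborel (\<lambda>x. gamma_density a b x * (x ^ k * exp (t * x)))
          (b powr a / Gamma a * (Gamma (a + k) / (b - t) powr (a + k)))"
    unfolding density_times
    by (intro has_bochner_integral_mult_right has_bochner_integral_gamma_kernel) (use a t in auto)
  moreover have "pochhammer a k = Gamma (a + k) / Gamma a"
    using a by (intro pochhammer_Gamma) (auto elim!: nonpos_Ints_cases)
  ultimately show ?thesis
    by (simp add: field_simps)
qed

context prob_space
begin

lemma gamma_distributed_moment_exp:
  assumes "0 < a" and "t < b" and D: "distributed M lborel Y (gamma_density a b)"
  shows "integrable M (\<lambda>\<omega>. Y \<omega> ^ k * exp (t * Y \<omega>))"
    and "expectation (\<lambda>\<omega>. Y \<omega> ^ k * exp (t * Y \<omega>))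
           = pochhammer a k * b powr a / (b - t) powr (a + k)"
proof -
  have [measurable]: "(\<lambda>x. x ^ k * exp (t * x)) \<in> borel_measurable lborel"
    by measurable
  note density_moment = has_bochner_integral_gamma_density_moment_exp[OF assms(1,2), of k]
  show "integrable M (\<lambda>\<omega>. Y \<omega> ^ k * exp (t * Y \<omega>))"
    using distributed_integrable[OF D] integrable.intros[OF density_moment] gamma_density_nonneg[OF \<open>0 < a\<close>]
    by simp
  show "expectation (\<lambda>\<omega>. Y \<omega> ^ k * exp (t * Y \<omega>))
          = pochhammer a k * b powr a / (b - t) powr (a + k)"
    using distributed_integral[OF D] has_bochner_integral_integral_eq[OF density_moment]
      gamma_density_nonneg[OF \<open>0 < a\<close>]
    by simp
qed

lemma gamma_distributed_moment:
  assumes "0 < a" and "0 < b" and "distributed M lborel Y (gamma_density a b)"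
  shows "integrable M (\<lambda>\<omega>. Y \<omega> ^ k)"
    and "expectation (\<lambda>\<omega>. Y \<omega> ^ k) = pochhammer a k / b ^ k"
  using gamma_distributed_moment_exp[OF assms(1,2,3), of k] \<open>0 < b\<close>
  by (simp_all add: powr_add powr_realpow)

lemma gamma_distributed_mgf:
  assumes "0 < a" and "t < b" and "distributed M lborel Y (gamma_density a b)"
  shows "expectation (\<lambda>\<omega>. exp (t * Y \<omega>)) = (b / (b - t)) powr a"
  using gamma_distributed_moment_exp(2)[OF assms, of 0] \<open>t < b\<close>
  by (simp add: powr_divide)

lemma gamma_distributed_expectation:
  assumes "0 < a" and "0 < b" and "distributed M lborel Y (gamma_density a b)"
  shows "expectation Y = a / b"
  using gamma_distributed_moment(2)[OF assms, of 1] by simp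

lemma gamma_distributed_variance:
  assumes "0 < a" and "0 < b" and "distributed M lborel Y (gamma_density a b)"
  shows "variance Y = a / b\<^sup>2"
proof (subst variance_eq)
  show "integrable M Y" "integrable M (\<lambda>x. (Y x)\<^sup>2)"
    using gamma_distributed_moment(1)[OF assms, of 1] gamma_distributed_moment(1)[OF assms, of 2]
    by simp_all
  show "expectation (\<lambda>x. (Y x)\<^sup>2) - (expectation Y)\<^sup>2 = a / b\<^sup>2"
    using gamma_distributed_moment(2)[OF assms, of 1] gamma_distributed_moment(2)[OF assms, of 2]
    by (simp add: numeral_2_eq_2 pochhammer_Suc power2_eq_square algebra_simps
        flip: diff_divide_distrib)
qed

end

lemma (in prob_space) indep_vars_integral_mult:
  fixes X :: "'i \<Rightarrow> 'a \<Rightarrow> real"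
  assumes indep: "indep_vars (\<lambda>_. borel) X I" and "i \<in> I" "j \<in> I" "i \<noteq> j"
    and "integrable M (X i)" "integrable M (X j)"
  shows "integrable M (\<lambda>\<omega>. X i \<omega> * X j \<omega>)"
    and "expectation (\<lambda>\<omega>. X i \<omega> * X j \<omega>) = expectation (X i) * expectation (X j)"
proof -
  have indep_ij: "indep_vars (\<lambda>_. borel) X {i, j}"
    using indep_vars_subset[OF indep] assms(2,3) by simp
  have "integrable M (\<lambda>\<omega>. \<Prod>k\<in>{i, j}. X k \<omega>)"
    using assms(5,6) by (intro indep_vars_integrable[OF _ indep_ij]) auto
  moreover have "expectation (\<lambda>\<omega>. \<Prod>k\<in>{i, j}. X k \<omega>) = (\<Prod>k\<in>{i, j}. expectation (X k))"
    using assms(5,6) by (intro indep_vars_lebesgue_integral[OF _ indep_ij]) auto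
  ultimately show "integrable M (\<lambda>\<omega>. X i \<omega> * X j \<omega>)"
    and "expectation (\<lambda>\<omega>. X i \<omega> * X j \<omega>) = expectation (X i) * expectation (X j)"
    using \<open>i \<noteq> j\<close> by simp_all
qed

lemma (in prob_space) variance_sum_indep:
  fixes X :: "'i \<Rightarrow> 'a \<Rightarrow> real"
  assumes "finite I" and indep: "indep_vars (\<lambda>_. borel) X I"
    and square_int: "\<And>i. i \<in> I \<Longrightarrow> integrable M (\<lambda>\<omega>. (X i \<omega>)\<^sup>2)"
  shows "variance (\<lambda>\<omega>. \<Sum>i\<in>I. X i \<omega>) = (\<Sum>i\<in>I. variance (X i))"
proof -
  have int: "i \<in> I \<Longrightarrow> integrable M (X i)" for i
    using indep square_int unfolding indep_vars_def
    by (blast intro: square_integrable_imp_integrable)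
  define Y where "Y i = (\<lambda>\<omega>. X i \<omega> - expectation (X i))" for i
  have "expectation (\<lambda>\<omega>. \<Sum>i\<in>I. X i \<omega>) = (\<Sum>i\<in>I. expectation (X i))"
    using int by (rule Bochner_Integration.integral_sum)
  then have centered: "(\<Sum>i\<in>I. X i \<omega>) - expectation (\<lambda>\<omega>. \<Sum>i\<in>I. X i \<omega>) = (\<Sum>i\<in>I. Y i \<omega>)" for \<omega>
    by (simp add: Y_def sum_subtractf)
  have indep_Y: "indep_vars (\<lambda>_. borel) Y I"
    unfolding Y_def by (rule indep_vars_compose2[OF indep, of "\<lambda>i x. x - expectation (X i)"]) simp
  have Y_int: "i \<in> I \<Longrightarrow> integrable M (Y i)" for i
    using int by (simp add: Y_def)
  have Y_mean: "i \<in> I \<Longrightarrow> expectation (Y i) = 0" for i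
    using int by (simp add: Y_def prob_space)
  have Y_prod: "integrable M (\<lambda>\<omega>. Y i \<omega> * Y j \<omega>) \<and>
      expectation (\<lambda>\<omega>. Y i \<omega> * Y j \<omega>) = (if i = j then variance (X i) else 0)"
    if "i \<in> I" "j \<in> I" for i j
  proof (cases "i = j")
    case True
    have "(\<lambda>\<omega>. Y i \<omega> * Y i \<omega>)
        = (\<lambda>\<omega>. (X i \<omega>)\<^sup>2 - 2 * expectation (X i) * X i \<omega> + (expectation (X i))\<^sup>2)"
      by (auto simp: Y_def power2_eq_square algebra_simps)
    then have "integrable M (\<lambda>\<omega>. Y i \<omega> * Y i \<omega>)"
      using int[OF that(1)] square_int[OF that(1)] by simp
    then show ?thesis
      using True by (simp add: Y_def power2_eq_square)
  next
    case False
    then show ?thesis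
      using indep_vars_integral_mult[OF indep_Y that False] Y_int Y_mean that by simp
  qed
  have "variance (\<lambda>\<omega>. \<Sum>i\<in>I. X i \<omega>) = expectation (\<lambda>\<omega>. \<Sum>i\<in>I. \<Sum>j\<in>I. Y i \<omega> * Y j \<omega>)"
    unfolding centered power2_eq_square sum_product ..
  also have "\<dots> = (\<Sum>i\<in>I. \<Sum>j\<in>I. if i = j then variance (X i) else 0)"
    using Y_prod by (simp add: integral_sum)
  also have "\<dots> = (\<Sum>i\<in>I. variance (X i))"
    using \<open>finite I\<close> by simp
  finally show ?thesis .
qed

lemma cumulant_eq_higher_deriv:
  assumes "open U" and "0 \<in> U"
    and "\<And>t. t \<in> U \<Longrightarrow> ln (\<integral>\<omega>. exp (t * X \<omega>) \<partial>M) = K t"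
  shows "cumulant M X j = (deriv ^^ j) K 0"
  unfolding cumulant_def
  by (rule higher_deriv_cong_ev) (use assms in \<open>auto simp: eventually_nhds\<close>)

lemma higher_deriv_Suc_eqI:
  assumes "open U" and "x \<in> U" and "\<And>y. y \<in> U \<Longrightarrow> (deriv ^^ j) f y = g y"
    and "(g has_field_derivative D) (at x)"
  shows "(deriv ^^ Suc j) f x = D"
proof -
  have "eventually (\<lambda>y. (deriv ^^ j) f y = g y) (nhds x)"
    unfolding eventually_nhds using assms(1-3) by blast
  then have "(deriv ^^ Suc j) f x = deriv g x"
    by (simp add: deriv_cong_ev)
  then show ?thesis
    using assms(4) by (simp add: DERIV_imp_deriv)
qed

definition gamma_cgf :: "real \<Rightarrow> real \<Rightarrow> real \<Rightarrow> real" where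
  "gamma_cgf a b t = a * (ln b - ln (b - t))"

lemma has_field_derivative_gamma_cgf:
  "t < b \<Longrightarrow> (gamma_cgf a b has_field_derivative a / (b - t)) (at t)"
  unfolding gamma_cgf_def by (rule derivative_eq_intros refl | simp)+

lemma has_field_derivative_div_power:
  fixes b c t :: real
  shows "t < b \<Longrightarrow>
    ((\<lambda>t. c / (b - t) ^ Suc k) has_field_derivative c * Suc k / (b - t) ^ Suc (Suc k)) (at t)"
  by (rule DERIV_cong, (rule derivative_eq_intros refl | simp)+)

lemma higher_deriv_sum_gamma_cgf:
  fixes a b :: "'i \<Rightarrow> real"
  assumes "\<And>i. i \<in> I \<Longrightarrow> m \<le> b i" and "t < m"
  shows "(deriv ^^ Suc k) (\<lambda>t. \<Sum>i\<in>I. gamma_cgf (a i) (b i) t) t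
           = (\<Sum>i\<in>I. a i * fact k / (b i - t) ^ Suc k)"
  using \<open>t < m\<close>
proof (induction k arbitrary: t)
  case 0
  then have "i \<in> I \<Longrightarrow> t < b i" for i
    using assms(1) by fastforce
  then have D: "((\<lambda>t. \<Sum>i\<in>I. gamma_cgf (a i) (b i) t) has_field_derivative
                  (\<Sum>i\<in>I. a i * fact 0 / (b i - t) ^ Suc 0)) (at t)"
    by (intro DERIV_sum) (simp add: has_field_derivative_gamma_cgf)
  show ?case
    by (rule higher_deriv_Suc_eqI[OF open_lessThan[of m] _ _ D]) (use 0 in simp_all)
next
  case (Suc k)
  then have "i \<in> I \<Longrightarrow> t < b i" for i
    using assms(1) by fastforce
  then have D: "((\<lambda>t. \<Sum>i\<in>I. a i * fact k / (b i - t) ^ Suc k) has_field_derivative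
                  (\<Sum>i\<in>I. a i * fact (Suc k) / (b i - t) ^ Suc (Suc k))) (at t)"
    by (intro DERIV_sum DERIV_cong[OF has_field_derivative_div_power]) (simp_all add: algebra_simps)
  show ?case
    by (rule higher_deriv_Suc_eqI[OF open_lessThan[of m] _ _ D])
      (use Suc in \<open>simp_all del: funpow.simps\<close>)
qed

lemma (in prob_space) mgf_sum_indep_gamma:
  fixes X :: "'i \<Rightarrow> 'a \<Rightarrow> real"
  assumes "finite I" and indep: "indep_vars (\<lambda>_. borel) X I"
    and pos: "\<And>i. i \<in> I \<Longrightarrow> 0 < a i"
    and distr: "\<And>i. i \<in> I \<Longrightarrow> distributed M lborel (X i) (gamma_density (a i) (b i))"
    and t: "\<And>i. i \<in> I \<Longrightarrow> t < b i"
  shows "expectation (\<lambda>\<omega>. exp (t * (\<Sum>i\<in>I. X i \<omega>))) = (\<Prod>i\<in>I. (b i / (b i - t)) powr a i)"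
proof -
  have "indep_vars (\<lambda>_. borel) (\<lambda>i \<omega>. exp (t * X i \<omega>)) I"
    by (rule indep_vars_compose2[OF indep]) simp
  then have "expectation (\<lambda>\<omega>. \<Prod>i\<in>I. exp (t * X i \<omega>)) = (\<Prod>i\<in>I. expectation (\<lambda>\<omega>. exp (t * X i \<omega>)))"
    using gamma_distributed_moment_exp(1)[OF pos t distr, of _ 0]
    by (intro indep_vars_lebesgue_integral \<open>finite I\<close>) auto
  also have "\<dots> = (\<Prod>i\<in>I. (b i / (b i - t)) powr a i)"
    using gamma_distributed_mgf[OF pos t distr] by (intro prod.cong) auto
  finally show ?thesis
    by (simp add: sum_distrib_left exp_sum \<open>finite I\<close>)
qed

lemma (in prob_space) cumulant_sum_indep_gamma:
  fixes X :: "'i \<Rightarrow> 'a \<Rightarrow> real"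
  assumes "finite I" and indep: "indep_vars (\<lambda>_. borel) X I"
    and pos: "\<And>i. i \<in> I \<Longrightarrow> 0 < a i \<and> 0 < b i"
    and distr: "\<And>i. i \<in> I \<Longrightarrow> distributed M lborel (X i) (gamma_density (a i) (b i))"
  shows "cumulant M (\<lambda>\<omega>. \<Sum>i\<in>I. X i \<omega>) (Suc k) = (\<Sum>i\<in>I. a i * fact k / b i ^ Suc k)"
proof -
  define m where "m = Min (insert 1 (b ` I))"
  have m_pos: "0 < m" and m_le: "i \<in> I \<Longrightarrow> m \<le> b i" for i
    using \<open>finite I\<close> pos by (auto simp: m_def)
  have cgf: "ln (expectation (\<lambda>\<omega>. exp (t * (\<Sum>i\<in>I. X i \<omega>)))) = (\<Sum>i\<in>I. gamma_cgf (a i) (b i) t)"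
    if "t < m" for t
  proof -
    have t: "i \<in> I \<Longrightarrow> 0 < b i \<and> t < b i" for i
      using that m_le[of i] pos[of i] by simp
    then have "ln (\<Prod>i\<in>I. (b i / (b i - t)) powr a i) = (\<Sum>i\<in>I. ln ((b i / (b i - t)) powr a i))"
      by (intro ln_prod \<open>finite I\<close>) force
    also have "\<dots> = (\<Sum>i\<in>I. gamma_cgf (a i) (b i) t)"
    proof (rule sum.cong[OF refl])
      show "ln ((b i / (b i - t)) powr a i) = gamma_cgf (a i) (b i) t" if "i \<in> I" for i
        using t[OF that] by (simp add: gamma_cgf_def ln_div)
    qed
    finally show ?thesis
      using t pos by (subst mgf_sum_indep_gamma[OF \<open>finite I\<close> indep _ distr]) auto
  qed
  have "cumulant M (\<lambda>\<omega>. \<Sum>i\<in>I. X i \<omega>) (Suc k)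
      = (deriv ^^ Suc k) (\<lambda>t. \<Sum>i\<in>I. gamma_cgf (a i) (b i) t) 0"
    using m_pos cgf by (intro cumulant_eq_higher_deriv[of "{..<m}"]) auto
  also have "\<dots> = (\<Sum>i\<in>I. a i * fact k / b i ^ Suc k)"
    using higher_deriv_sum_gamma_cgf[OF m_le m_pos] by simp
  finally show ?thesis .
qed

lemma (in prob_space) cumulant_gamma:
  assumes "0 < a" and "0 < b" and distr: "distributed M lborel Y (gamma_density a b)"
  shows "cumulant M Y (Suc k) = a * fact k / b ^ Suc k"
proof -
  have "cumulant M Y (Suc k) = (deriv ^^ Suc k) (gamma_cgf a b) 0"
    using assms gamma_distributed_mgf[OF \<open>0 < a\<close> _ distr]
    by (intro cumulant_eq_higher_deriv[of "{..<b}"]) (auto simp: gamma_cgf_def ln_div)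
  also have "\<dots> = a * fact k / b ^ Suc k"
    using higher_deriv_sum_gamma_cgf[of "{()}" b "\<lambda>_. b" 0 k "\<lambda>_. a"] \<open>0 < b\<close> by simp
  finally show ?thesis .
qed

lemma normal_density_mult_exp:
  assumes "0 < s"
  shows "normal_density m s x * exp (t * x)
           = exp (m * t + s\<^sup>2 * t\<^sup>2 / 2) * normal_density (m + s\<^sup>2 * t) s x"
proof -
  have "- (x - m)\<^sup>2 / (2 * s\<^sup>2) + t * x
      = (m * t + s\<^sup>2 * t\<^sup>2 / 2) + - (x - (m + s\<^sup>2 * t))\<^sup>2 / (2 * s\<^sup>2)"
    using assms by (simp add: field_simps power2_eq_square)
  then show ?thesis
    unfolding normal_density_def by (simp add: exp_add[symmetric] mult.left_commute)
qed

lemma (in prob_space) normal_distributed_mgf: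
  assumes "0 < s" and distr: "distributed M lborel Z (normal_density m s)"
  shows "expectation (\<lambda>\<omega>. exp (t * Z \<omega>)) = exp (m * t + s\<^sup>2 * t\<^sup>2 / 2)"
proof -
  have "expectation (\<lambda>\<omega>. exp (t * Z \<omega>)) = (\<integral>x. normal_density m s x * exp (t * x) \<partial>lborel)"
    using distributed_integral[OF distr, of "\<lambda>x. exp (t * x)"] by simp
  also have "\<dots> = exp (m * t + s\<^sup>2 * t\<^sup>2 / 2) * (\<integral>x. normal_density (m + s\<^sup>2 * t) s x \<partial>lborel)"
    unfolding normal_density_mult_exp[OF \<open>0 < s\<close>] by simp
  finally show ?thesis
    using \<open>0 < s\<close> by simp
qed

lemma higher_deriv_quadratic:
  fixes m v :: real
  shows "(deriv ^^ j) (\<lambda>t. m * t + v * t\<^sup>2 / 2) 0 = (if j = 1 then m else if j = 2 then v else 0)"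
proof -
  have d1: "deriv (\<lambda>t. m * t + v * t\<^sup>2 / 2) = (\<lambda>t. m + v * t)"
    by (intro ext DERIV_imp_deriv) (rule derivative_eq_intros refl | simp)+
  have d2: "deriv (\<lambda>t. m + v * t) = (\<lambda>_. v)"
    by (intro ext DERIV_imp_deriv) (rule derivative_eq_intros refl | simp)+
  show ?thesis
  proof (cases "j < 3")
    case True
    moreover have "(deriv ^^ 2) f = deriv (deriv f)" for f :: "real \<Rightarrow> real"
      by (simp add: numeral_2_eq_2)
    ultimately show ?thesis
      by (auto simp: d1 d2 less_Suc_eq numeral_3_eq_3)
  next
    case False
    then obtain k where "j = k + 3"
      using le_Suc_ex[of 3 j] by (auto simp: add.commute)
    have "(deriv ^^ 3) f = deriv (deriv (deriv f))" for f :: "real \<Rightarrow> real"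
      by (simp add: numeral_3_eq_3)
    then have "(deriv ^^ j) (\<lambda>t. m * t + v * t\<^sup>2 / 2) = (deriv ^^ k) (\<lambda>_. 0)"
      by (simp add: \<open>j = k + 3\<close> funpow_add d1 d2)
    moreover have "(deriv ^^ k) (\<lambda>_. 0 :: real) = (\<lambda>_. 0)"
      by (induction k) auto
    ultimately show ?thesis
      using False by simp
  qed
qed

lemma (in prob_space) cumulant_normal:
  assumes "0 < s" and "distributed M lborel Z (normal_density m s)"
  shows "cumulant M Z j = (if j = 1 then m else if j = 2 then s\<^sup>2 else 0)"
  unfolding cumulant_def normal_distributed_mgf[OF assms] by (simp add: higher_deriv_quadratic)

lemma moment_matched_div_power_le:
  fixes a b :: "'i \<Rightarrow> real"
  assumes "finite I" and pos: "\<And>i. i \<in> I \<Longrightarrow> 0 < a i \<and> 0 < b i"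
    and "0 < \<alpha>" and "0 < \<beta>"
    and mean: "\<alpha> / \<beta> = (\<Sum>i\<in>I. a i / b i)" and var: "\<alpha> / \<beta>\<^sup>2 = (\<Sum>i\<in>I. a i / (b i)\<^sup>2)"
  shows "\<alpha> / \<beta> ^ Suc k \<le> (\<Sum>i\<in>I. a i / b i ^ Suc k)"
proof -
  define \<mu> where "\<mu> = \<alpha> / \<beta>"
  have "0 < \<mu>"
    using \<open>0 < \<alpha>\<close> \<open>0 < \<beta>\<close> by (simp add: \<mu>_def)
  define w where "w i = a i / b i / \<mu>" for i
  have "(\<Sum>i\<in>I. w i) = (\<Sum>i\<in>I. a i / b i) / \<mu>"
    unfolding w_def by (rule sum_divide_distrib[symmetric])
  also have "\<dots> = 1"
    using \<open>0 < \<mu>\<close> mean by (simp add: \<mu>_def)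
  finally have "(\<Sum>i\<in>I. w i) = 1" .
  then have "I \<noteq> {}"
    by auto
  have "convex_on {0..} (\<lambda>x::real. x ^ k)"
    by (cases "even k") (auto intro: convex_on_subset[OF convex_power_even] convex_power_odd)
  moreover have "i \<in> I \<Longrightarrow> 0 \<le> w i \<and> 1 / b i \<in> {0..}" for i
    using pos[of i] \<open>0 < \<mu>\<close> by (simp add: w_def)
  ultimately have "(\<Sum>i\<in>I. w i *\<^sub>R (1 / b i)) ^ k \<le> (\<Sum>i\<in>I. w i * (1 / b i) ^ k)"
    using \<open>finite I\<close> \<open>I \<noteq> {}\<close> \<open>(\<Sum>i\<in>I. w i) = 1\<close>
    by (intro convex_on_sum) auto
  also have "(\<Sum>i\<in>I. w i *\<^sub>R (1 / b i)) = (\<Sum>i\<in>I. a i / (b i)\<^sup>2) / \<mu>"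
    by (simp add: w_def power2_eq_square sum_divide_distrib ac_simps)
  also have "\<dots> = 1 / \<beta>"
    unfolding var[symmetric] \<mu>_def using \<open>0 < \<alpha>\<close> by (simp add: power2_eq_square)
  also have "(\<Sum>i\<in>I. w i * (1 / b i) ^ k) = (\<Sum>i\<in>I. a i / b i ^ Suc k) / \<mu>"
    by (simp add: w_def power_divide sum_divide_distrib ac_simps)
  finally have "\<mu> * (1 / \<beta>) ^ k \<le> (\<Sum>i\<in>I. a i / b i ^ Suc k)"
    using \<open>0 < \<mu>\<close> by (simp add: pos_le_divide_eq mult.commute)
  then show ?thesis
    by (simp add: \<mu>_def power_divide)
qed

theorem theorem2:
  fixes M :: "'a measure" and MZ :: "'b measure" and MG :: "'c measure"
    and X :: "nat \<Rightarrow> 'a \<Rightarrow> real" and Z :: "'b \<Rightarrow> real" and G :: "'c \<Rightarrow> real"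
    and \<alpha>s \<beta>s :: "nat \<Rightarrow> real" and n :: nat
    and S :: "'a \<Rightarrow> real" and \<mu> \<sigma>2 \<alpha> \<beta> :: real
  assumes "prob_space M" and "n \<ge> 1"
    and "prob_space.indep_vars M (\<lambda>_. borel) X {1..n}"
    and "\<And>i. i \<in> {1..n} \<Longrightarrow> \<alpha>s i > 0 \<and> \<beta>s i > 0"
    and "\<And>i. i \<in> {1..n} \<Longrightarrow> distributed M lborel (X i) (gamma_density (\<alpha>s i) (\<beta>s i))"
    and S_def: "S = (\<lambda>\<omega>. \<Sum>i=1..n. X i \<omega>)"
    and mu_def: "\<mu> = (\<integral>\<omega>. S \<omega> \<partial>M)"
    and sigma_def: "\<sigma>2 = (\<integral>\<omega>. (S \<omega> - \<mu>)\<^sup>2 \<partial>M)"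
    and "prob_space MZ" and "distributed MZ lborel Z (normal_density \<mu> (sqrt \<sigma>2))"
    and "\<alpha> > 0" and "\<beta> > 0" and "\<alpha> / \<beta> = \<mu>" and "\<alpha> / \<beta>\<^sup>2 = \<sigma>2"
    and "prob_space MG" and "distributed MG lborel G (gamma_density \<alpha> \<beta>)"
  shows "(0 < cumulant M S 1 \<and> cumulant M S 1 = cumulant MZ Z 1 \<and>
         cumulant MZ Z 1 = cumulant MG G 1 \<and> cumulant MG G 1 = \<mu>) \<and>
         (0 < cumulant M S 2 \<and> cumulant M S 2 = cumulant MZ Z 2 \<and>
         cumulant MZ Z 2 = cumulant MG G 2 \<and> cumulant MG G 2 = \<sigma>2) \<and>
         (\<forall>j\<ge>3. 0 = cumulant MZ Z j \<and> cumulant MZ Z j < cumulant MG G j \<and>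
                 cumulant MG G j \<le> cumulant M S j)"
proof -
  interpret prob_space M by fact
  note indep = assms(3) and pos = assms(4) and distr = assms(5)
  have mean: "\<mu> = (\<Sum>i=1..n. \<alpha>s i / \<beta>s i)"
    using gamma_distributed_moment(1)[OF _ _ distr, of _ 1]
      gamma_distributed_expectation[OF _ _ distr] pos
    by (simp add: mu_def S_def integral_sum)
  have var: "\<sigma>2 = (\<Sum>i=1..n. \<alpha>s i / (\<beta>s i)\<^sup>2)"
    using variance_sum_indep[OF _ indep] gamma_distributed_moment(1)[OF _ _ distr, of _ 2]
      gamma_distributed_variance[OF _ _ distr] pos
    by (simp add: sigma_def mu_def S_def)
  have cum_S: "cumulant M S (Suc k) = (\<Sum>i=1..n. \<alpha>s i * fact k / \<beta>s i ^ Suc k)" for k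
    unfolding S_def using pos distr by (intro cumulant_sum_indep_gamma indep) auto
  have cum_G: "cumulant MG G (Suc k) = \<alpha> * fact k / \<beta> ^ Suc k" for k
    using prob_space.cumulant_gamma[OF assms(15,11,12,16)] .
  have cum_Z: "cumulant MZ Z j = (if j = 1 then \<mu> else if j = 2 then \<sigma>2 else 0)" for j
    using prob_space.cumulant_normal[OF assms(9) _ assms(10)] assms(11-14) by auto
  have G_le_S: "cumulant MG G (Suc k) \<le> cumulant M S (Suc k)" for k
    using mult_left_mono[OF moment_matched_div_power_le[of "{1..n}" \<alpha>s \<beta>s \<alpha> \<beta> k], of "fact k"]
      pos assms(11-14) mean var
    by (simp add: cum_S cum_G sum_distrib_left ac_simps)
  have "0 < cumulant MG G j \<and> cumulant MG G j \<le> cumulant M S j" if "j \<ge> 3" for j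
    using cum_G[of "j - 1"] G_le_S[of "j - 1"] that assms(11,12) by simp
  moreover have "cumulant M S 1 = \<mu>" "cumulant M S 2 = \<sigma>2"
    using cum_S[of 0] cum_S[of 1] mean var by (simp_all add: numeral_2_eq_2 power2_eq_square)
  moreover have "cumulant MG G 1 = \<mu>" "cumulant MG G 2 = \<sigma>2"
    using cum_G[of 0] cum_G[of 1] assms(13,14) by (simp_all add: numeral_2_eq_2 power2_eq_square)
  moreover have "0 < \<mu>" "0 < \<sigma>2"
    using assms(11-14) by auto
  ultimately show ?thesis
    using cum_Z by auto
qed

end
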